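(* Consider a multi-agent Markov game with agents $\mathcal N=\{1,\dots,n\}$, finite local state spaces $\mathcal S_i$ and action spaces $\mathcal A_i$, bounded rewards $r_i:\mathcal S\times\mathcal A\to\mathbb R$, discount $\gamma\in(0,1)$, and local policies $\xi_i:\mathcal S_i\to\Delta(\mathcal A_i)$ (joint policy $\xi(a\mid s)=\prod_i\xi_i(a_i\mid s_i)$). Suppose that (i) the transitions are completely local: given $(s(t),a(t))$, the components $s_i(t+1)$ are drawn independently with $s_i(t+1)\sim P_i(\cdot\mid s_i(t),a_i(t))$; (ii) the one-shot game is a potential game: there is $\phi:\mathcal S\times\mathcal A\to\mathbb R$ such that for all $i$, all $(s_i,a_i),(s_i',a_i')\in\mathcal S_i\times\mathcal A_i$ and all $(s_{-i},a_{-i})$, $r_i(s_i,a_i,s_{-i},a_{-i})-r_i(s_i',a_i',s_{-i},a_{-i})=\phi(s_i,a_i,s_{-i},a_{-i})-\phi(s_i',a_i',s_{-i},a_{-i})$. Then there is a function $\Phi:\Xi\times\mathcal S\to\mathbb R$ (namely $\Phi^\xi(s)=\sum_{t\ge0}\gamma^t\mathbb E_\xi[\phi(s(t),a(t))\mid s(0)=s]$) such that for every agent $i$, all $\xi_i,\xi_i'\in\Xi_i$, all $\xi_{-i}\in\Xi_{-i}$ and all $s\in\mathcal S$, $$V_i^{\xi_i,\xi_{-i}}(s)-V_i^{\xi_i',\xi_{-i}}(s)=\Phi^{\xi_i,\xi_{-i}}(s)-\Phi^{\xi_i',\xi_{-i}}(s).$$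
   Context: $\Xi_i$ denotes the set of local policies of agent $i$, $\Xi=\prod_i\Xi_i$, $\Xi_{-i}=\prod_{j\ne i}\Xi_j$. $V_i^\xi(s)=\sum_{t\ge0}\gamma^t\mathbb E_\xi[r_i(s(t),a(t))\mid s(0)=s]$, where $a(t)\sim\xi(\cdot\mid s(t))$. *)

theory Defs
  imports "HOL-Analysis.Analysis"
begin

text \<open>Agent i has a finite local state
space S i (a subset of 's) and a finite local action space A i (a subset of 'a).\<close>

definition joint_states :: "('i \<Rightarrow> 's set) \<Rightarrow> ('i \<Rightarrow> 's) set" where
  "joint_states S = Pi\<^sub>E UNIV S"

definition joint_actions :: "('i \<Rightarrow> 'a set) \<Rightarrow> ('i \<Rightarrow> 'a) set" where
  "joint_actions A = Pi\<^sub>E UNIV A"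

definition is_distr :: "'b set \<Rightarrow> ('b \<Rightarrow> real) \<Rightarrow> bool" where
  "is_distr X p \<longleftrightarrow> (\<forall>x\<in>X. p x \<ge> 0) \<and> (\<Sum>x\<in>X. p x) = 1"

text \<open>A local policy xi_i : S_i \<rightarrow> \<Delta>(A_i); xi_i s_i a_i is the probability of a_i in s_i.\<close>
definition local_policy :: "'s set \<Rightarrow> 'a set \<Rightarrow> ('s \<Rightarrow> 'a \<Rightarrow> real) \<Rightarrow> bool" where
  "local_policy Si Ai xi \<longleftrightarrow> (\<forall>si\<in>Si. is_distr Ai (xi si))"

definition policy_profile ::
  "('i \<Rightarrow> 's set) \<Rightarrow> ('i \<Rightarrow> 'a set) \<Rightarrow> ('i \<Rightarrow> 's \<Rightarrow> 'a \<Rightarrow> real) \<Rightarrow> bool" where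
  "policy_profile S A xi \<longleftrightarrow> (\<forall>i. local_policy (S i) (A i) (xi i))"

definition joint_policy :: "('i::finite \<Rightarrow> 's \<Rightarrow> 'a \<Rightarrow> real) \<Rightarrow> ('i \<Rightarrow> 's) \<Rightarrow> ('i \<Rightarrow> 'a) \<Rightarrow> real" where
  "joint_policy xi s a = (\<Prod>i\<in>UNIV. xi i (s i) (a i))"

text \<open>Completely local transition kernels: P i s_i a_i s_i' is the probability that
agent i moves to s_i' from s_i under a_i.\<close>
definition local_transitions ::
  "('i \<Rightarrow> 's set) \<Rightarrow> ('i \<Rightarrow> 'a set) \<Rightarrow> ('i \<Rightarrow> 's \<Rightarrow> 'a \<Rightarrow> 's \<Rightarrow> real) \<Rightarrow> bool" where
  "local_transitions S A P \<longleftrightarrow>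
     (\<forall>i. \<forall>si\<in>S i. \<forall>ai\<in>A i. is_distr (S i) (P i si ai))"

definition joint_trans :: "('i::finite \<Rightarrow> 's \<Rightarrow> 'a \<Rightarrow> 's \<Rightarrow> real) \<Rightarrow> ('i \<Rightarrow> 's) \<Rightarrow> ('i \<Rightarrow> 'a) \<Rightarrow> ('i \<Rightarrow> 's) \<Rightarrow> real" where
  "joint_trans P s a s' = (\<Prod>i\<in>UNIV. P i (s i) (a i) (s' i))"

fun state_dist ::
  "('i::finite \<Rightarrow> 's set) \<Rightarrow> ('i \<Rightarrow> 'a set) \<Rightarrow> ('i \<Rightarrow> 's \<Rightarrow> 'a \<Rightarrow> 's \<Rightarrow> real) \<Rightarrow>
   ('i \<Rightarrow> 's \<Rightarrow> 'a \<Rightarrow> real) \<Rightarrow> ('i \<Rightarrow> 's) \<Rightarrow> nat \<Rightarrow> ('i \<Rightarrow> 's) \<Rightarrow> real" where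
  "state_dist S A P xi s0 0 = (\<lambda>s. if s = s0 then 1 else 0)"
| "state_dist S A P xi s0 (Suc t) = (\<lambda>s'.
     \<Sum>s\<in>joint_states S. state_dist S A P xi s0 t s *
        (\<Sum>a\<in>joint_actions A. joint_policy xi s a * joint_trans P s a s'))"

definition expected_reward ::
  "('i::finite \<Rightarrow> 's set) \<Rightarrow> ('i \<Rightarrow> 'a set) \<Rightarrow> ('i \<Rightarrow> 's \<Rightarrow> 'a \<Rightarrow> 's \<Rightarrow> real) \<Rightarrow>
   ('i \<Rightarrow> 's \<Rightarrow> 'a \<Rightarrow> real) \<Rightarrow> (('i \<Rightarrow> 's) \<Rightarrow> ('i \<Rightarrow> 'a) \<Rightarrow> real) \<Rightarrow> ('i \<Rightarrow> 's) \<Rightarrow> nat \<Rightarrow> real" where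
  "expected_reward S A P xi R s0 t =
     (\<Sum>s\<in>joint_states S. state_dist S A P xi s0 t s *
        (\<Sum>a\<in>joint_actions A. joint_policy xi s a * R s a))"

text \<open>Discounted value \<Sum>_{t\<ge>0} \<gamma>^t E_xi[R(s(t),a(t)) | s(0)=s0].
  V_i^xi is disc_value with R = r i; the potential \<Phi>^xi is disc_value with R = \<phi>.\<close>
definition disc_value ::
  "('i::finite \<Rightarrow> 's set) \<Rightarrow> ('i \<Rightarrow> 'a set) \<Rightarrow> ('i \<Rightarrow> 's \<Rightarrow> 'a \<Rightarrow> 's \<Rightarrow> real) \<Rightarrow> real \<Rightarrow>
   ('i \<Rightarrow> 's \<Rightarrow> 'a \<Rightarrow> real) \<Rightarrow> (('i \<Rightarrow> 's) \<Rightarrow> ('i \<Rightarrow> 'a) \<Rightarrow> real) \<Rightarrow> ('i \<Rightarrow> 's) \<Rightarrow> real" where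
  "disc_value S A P \<gamma> xi R s0 = (\<Sum>t. \<gamma> ^ t * expected_reward S A P xi R s0 t)"

end

theory Submission
  imports Defs
begin

text \<open>With completely local transitions and a product policy, the law of (s(t), a(t)) is the
product of the laws of the agents' local pairs (s_j(t), a_j(t)), and agent i's policy enters
only the i-th factor. By the potential property, r_i - \<phi> does not depend on agent i's
component, so its expectation at every time t only sees the other factors and the total mass 1
of the i-th one; hence it is unchanged by a deviation of agent i. Summing the discounted series
(all expected rewards are bounded on the finite state and action spaces) gives the claim.\<close>

fun local_state_dist ::
  "'s set \<Rightarrow> 'a set \<Rightarrow> ('s \<Rightarrow> 'a \<Rightarrow> 's \<Rightarrow> real) \<Rightarrow> ('s \<Rightarrow> 'a \<Rightarrow> real) \<Rightarrow> 's \<Rightarrow> nat \<Rightarrow> 's \<Rightarrow> real"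
where
  "local_state_dist Sj Aj Pj xj x0 0 = (\<lambda>x. if x = x0 then 1 else 0)"
| "local_state_dist Sj Aj Pj xj x0 (Suc t) = (\<lambda>x'.
     \<Sum>x\<in>Sj. local_state_dist Sj Aj Pj xj x0 t x * (\<Sum>y\<in>Aj. xj x y * Pj x y x'))"

definition local_sa_dist ::
  "'s set \<Rightarrow> 'a set \<Rightarrow> ('s \<Rightarrow> 'a \<Rightarrow> 's \<Rightarrow> real) \<Rightarrow> ('s \<Rightarrow> 'a \<Rightarrow> real) \<Rightarrow> 's \<Rightarrow> nat \<Rightarrow> 's \<Rightarrow> 'a \<Rightarrow> real"
where
  "local_sa_dist Sj Aj Pj xj x0 t x y = local_state_dist Sj Aj Pj xj x0 t x * xj x y"

lemma is_distr_local_state_dist: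
  assumes "finite Sj" and policy: "local_policy Sj Aj xj"
    and kernel: "\<forall>x\<in>Sj. \<forall>y\<in>Aj. is_distr Sj (Pj x y)" and "x0 \<in> Sj"
  shows "is_distr Sj (local_state_dist Sj Aj Pj xj x0 t)"
proof (induction t)
  case 0
  then show ?case using assms by (simp add: is_distr_def)
next
  case (Suc t)
  let ?q = "local_state_dist Sj Aj Pj xj x0 t"
  have policy_nonneg: "\<And>x y. x \<in> Sj \<Longrightarrow> y \<in> Aj \<Longrightarrow> 0 \<le> xj x y"
    and policy_sum: "\<And>x. x \<in> Sj \<Longrightarrow> (\<Sum>y\<in>Aj. xj x y) = 1"
    using policy by (auto simp: local_policy_def is_distr_def)
  have kernel_nonneg: "\<And>x y x'. x \<in> Sj \<Longrightarrow> y \<in> Aj \<Longrightarrow> x' \<in> Sj \<Longrightarrow> 0 \<le> Pj x y x'"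
    and kernel_sum: "\<And>x y. x \<in> Sj \<Longrightarrow> y \<in> Aj \<Longrightarrow> (\<Sum>x'\<in>Sj. Pj x y x') = 1"
    using kernel by (auto simp: is_distr_def)
  have "(\<Sum>x'\<in>Sj. local_state_dist Sj Aj Pj xj x0 (Suc t) x')
      = (\<Sum>x\<in>Sj. ?q x * (\<Sum>y\<in>Aj. xj x y * (\<Sum>x'\<in>Sj. Pj x y x')))"
  proof -
    have "(\<Sum>x'\<in>Sj. local_state_dist Sj Aj Pj xj x0 (Suc t) x')
        = (\<Sum>x\<in>Sj. \<Sum>x'\<in>Sj. ?q x * (\<Sum>y\<in>Aj. xj x y * Pj x y x'))"
      by (simp only: local_state_dist.simps) (rule sum.swap)
    also have "\<dots> = (\<Sum>x\<in>Sj. ?q x * (\<Sum>y\<in>Aj. \<Sum>x'\<in>Sj. xj x y * Pj x y x'))"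
      by (simp only: sum_distrib_left sum.swap[where A = Sj and B = Aj])
    finally show ?thesis
      by (simp only: sum_distrib_left)
  qed
  also have "\<dots> = (\<Sum>x\<in>Sj. ?q x)"
    by (intro sum.cong refl) (simp add: kernel_sum policy_sum)
  finally show ?case
    using Suc policy_nonneg kernel_nonneg
    by (auto simp: is_distr_def intro!: sum_nonneg mult_nonneg_nonneg)
qed

lemma is_distr_bounds:
  fixes p :: "'b \<Rightarrow> real"
  assumes "is_distr X p" "finite X" "x \<in> X"
  shows "0 \<le> p x \<and> p x \<le> 1"
  using assms member_le_sum[of x X p] by (auto simp: is_distr_def)

lemma local_sa_dist_bounds:
  assumes "finite Sj" "finite Aj" and policy: "local_policy Sj Aj xj"
    and kernel: "\<forall>x\<in>Sj. \<forall>y\<in>Aj. is_distr Sj (Pj x y)" and "x0 \<in> Sj"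
    and "x \<in> Sj" "y \<in> Aj"
  shows "0 \<le> local_sa_dist Sj Aj Pj xj x0 t x y \<and> local_sa_dist Sj Aj Pj xj x0 t x y \<le> 1"
proof -
  have "is_distr Sj (local_state_dist Sj Aj Pj xj x0 t)" and "is_distr Aj (xj x)"
    using is_distr_local_state_dist[OF _ policy kernel] assms
    by (auto simp: local_policy_def)
  then have "0 \<le> local_state_dist Sj Aj Pj xj x0 t x \<and> local_state_dist Sj Aj Pj xj x0 t x \<le> 1"
    and "0 \<le> xj x y \<and> xj x y \<le> 1"
    using assms by (simp_all add: is_distr_bounds)
  then show ?thesis
    by (simp add: local_sa_dist_def mult_le_one)
qed

lemma sum_local_sa_dist:
  assumes "finite Sj" and policy: "local_policy Sj Aj xj"
    and kernel: "\<forall>x\<in>Sj. \<forall>y\<in>Aj. is_distr Sj (Pj x y)" and "x0 \<in> Sj"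
  shows "(\<Sum>x\<in>Sj. \<Sum>y\<in>Aj. local_sa_dist Sj Aj Pj xj x0 t x y) = 1"
proof -
  have "(\<Sum>x\<in>Sj. \<Sum>y\<in>Aj. local_sa_dist Sj Aj Pj xj x0 t x y)
      = (\<Sum>x\<in>Sj. local_state_dist Sj Aj Pj xj x0 t x * (\<Sum>y\<in>Aj. xj x y))"
    by (simp add: local_sa_dist_def sum_distrib_left)
  also have "\<dots> = (\<Sum>x\<in>Sj. local_state_dist Sj Aj Pj xj x0 t x)"
    using policy by (intro sum.cong refl) (auto simp: local_policy_def is_distr_def)
  also have "\<dots> = 1"
    using is_distr_local_state_dist[OF assms] by (simp add: is_distr_def)
  finally show ?thesis .
qed

lemma state_dist_eq_prod_local_state_dist:
  fixes S :: "'i::finite \<Rightarrow> 's set"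
  assumes finS: "\<And>i. finite (S i)" and finA: "\<And>i. finite (A i)"
  shows "state_dist S A P xi s0 t s = (\<Prod>j\<in>UNIV. local_state_dist (S j) (A j) (P j) (xi j) (s0 j) t (s j))"
proof (induction t arbitrary: s)
  case 0
  show ?case
  proof (cases "s = s0")
    case False
    then obtain j where "s j \<noteq> s0 j" by auto
    then show ?thesis using False by (auto simp: prod_zero_iff)
  qed simp
next
  case (Suc t)
  let ?q = "\<lambda>j. local_state_dist (S j) (A j) (P j) (xi j) (s0 j) t"
  have step_factorizes: "(\<Sum>a\<in>joint_actions A. joint_policy xi z a * joint_trans P z a s)
      = (\<Prod>j\<in>UNIV. \<Sum>y\<in>A j. xi j (z j) y * P j (z j) y (s j))" for z
    unfolding joint_actions_def joint_policy_def joint_trans_def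
    by (subst prod_sum_PiE) (simp_all add: finA prod.distrib)
  have "state_dist S A P xi s0 (Suc t) s
      = (\<Sum>z\<in>joint_states S. \<Prod>j\<in>UNIV. ?q j (z j) * (\<Sum>y\<in>A j. xi j (z j) y * P j (z j) y (s j)))"
    by (simp only: state_dist.simps Suc step_factorizes prod.distrib)
  also have "\<dots> = (\<Prod>j\<in>UNIV. local_state_dist (S j) (A j) (P j) (xi j) (s0 j) (Suc t) (s j))"
    by (simp add: joint_states_def prod_sum_PiE finS)
  finally show ?case .
qed

lemma expected_reward_eq_sum_prod_local_sa_dist:
  fixes S :: "'i::finite \<Rightarrow> 's set"
  assumes "\<And>i. finite (S i)" and "\<And>i. finite (A i)"
  shows "expected_reward S A P xi R s0 t =
    (\<Sum>s\<in>joint_states S. \<Sum>a\<in>joint_actions A.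
       (\<Prod>j\<in>UNIV. local_sa_dist (S j) (A j) (P j) (xi j) (s0 j) t (s j) (a j)) * R s a)"
  unfolding expected_reward_def state_dist_eq_prod_local_state_dist[OF assms] joint_policy_def
    local_sa_dist_def
  by (simp only: sum_distrib_left prod.distrib mult.assoc)

lemma insert_Compl_singleton: "insert x (-{x}) = UNIV"
  by auto

lemma sum_PiE_UNIV_split:
  fixes S :: "'i \<Rightarrow> 's set" and F :: "('i \<Rightarrow> 's) \<Rightarrow> 'b::comm_monoid_add"
  shows "(\<Sum>s\<in>Pi\<^sub>E UNIV S. F s) = (\<Sum>x\<in>S i. \<Sum>g\<in>Pi\<^sub>E (-{i}) S. F (g(i := x)))"
proof -
  have "Pi\<^sub>E UNIV S = (\<lambda>(y, g). g(i := y)) ` (S i \<times> Pi\<^sub>E (-{i}) S)"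
    using PiE_insert_eq[of i "-{i}" S] by (simp add: insert_Compl_singleton)
  then have "(\<Sum>s\<in>Pi\<^sub>E UNIV S. F s) = (\<Sum>p\<in>S i \<times> Pi\<^sub>E (-{i}) S. F ((\<lambda>(y, g). g(i := y)) p))"
    by (auto intro: sum.reindex_cong[OF inj_combinator])
  then show ?thesis
    by (simp add: sum.cartesian_product split_def)
qed

lemma sum_prod_weights_factor:
  fixes S :: "'i::finite \<Rightarrow> 's set" and A :: "'i \<Rightarrow> 'a set"
    and W :: "'i \<Rightarrow> 's \<Rightarrow> 'a \<Rightarrow> real" and G :: "('i \<Rightarrow> 's) \<Rightarrow> ('i \<Rightarrow> 'a) \<Rightarrow> real"
  assumes invariant: "\<And>s a x y. s \<in> Pi\<^sub>E UNIV S \<Longrightarrow> a \<in> Pi\<^sub>E UNIV A \<Longrightarrow> x \<in> S i \<Longrightarrow> y \<in> A i \<Longrightarrow>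
       G (s(i := x)) (a(i := y)) = G s a"
    and c: "c \<in> S i" and d: "d \<in> A i"
  shows "(\<Sum>s\<in>Pi\<^sub>E UNIV S. \<Sum>a\<in>Pi\<^sub>E UNIV A. (\<Prod>j\<in>UNIV. W j (s j) (a j)) * G s a)
     = (\<Sum>x\<in>S i. \<Sum>y\<in>A i. W i x y) *
       (\<Sum>g\<in>Pi\<^sub>E (-{i}) S. \<Sum>h\<in>Pi\<^sub>E (-{i}) A.
          (\<Prod>j\<in>-{i}. W j (g j) (h j)) * G (g(i := c)) (h(i := d)))"
proof -
  let ?rest = "\<lambda>g h. (\<Prod>j\<in>-{i}. W j (g j) (h j)) * G (g(i := c)) (h(i := d))"
  have prod_split: "(\<Prod>j\<in>UNIV. W j (s j) (a j)) = W i (s i) (a i) * (\<Prod>j\<in>-{i}. W j (s j) (a j))"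
    for s a
    using prod.remove[of UNIV i "\<lambda>j. W j (s j) (a j)"] by (simp add: Compl_eq_Diff_UNIV)
  have summand: "(\<Prod>j\<in>UNIV. W j ((g(i := x)) j) ((h(i := y)) j)) * G (g(i := x)) (h(i := y))
      = W i x y * ?rest g h"
    if "g \<in> Pi\<^sub>E (-{i}) S" "h \<in> Pi\<^sub>E (-{i}) A" "x \<in> S i" "y \<in> A i" for g h x y
  proof -
    have "g(i := x) \<in> Pi\<^sub>E UNIV S" and "h(i := y) \<in> Pi\<^sub>E UNIV A"
      using that PiE_fun_upd[of x S i g "-{i}"] PiE_fun_upd[of y A i h "-{i}"]
      by (simp_all add: insert_Compl_singleton)
    then have "G (g(i := x)) (h(i := y)) = G (g(i := c)) (h(i := d))"
      using invariant[OF _ _ c d] by (metis fun_upd_upd)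
    moreover have "(\<Prod>j\<in>-{i}. W j ((g(i := x)) j) ((h(i := y)) j)) = (\<Prod>j\<in>-{i}. W j (g j) (h j))"
      by (rule prod.cong) auto
    ultimately show ?thesis
      by (simp add: prod_split mult.assoc)
  qed
  have "(\<Sum>s\<in>Pi\<^sub>E UNIV S. \<Sum>a\<in>Pi\<^sub>E UNIV A. (\<Prod>j\<in>UNIV. W j (s j) (a j)) * G s a)
      = (\<Sum>x\<in>S i. \<Sum>g\<in>Pi\<^sub>E (-{i}) S. \<Sum>y\<in>A i. \<Sum>h\<in>Pi\<^sub>E (-{i}) A. W i x y * ?rest g h)"
    by (simp only: sum_PiE_UNIV_split[of _ S i] sum_PiE_UNIV_split[of _ A i])
      (intro sum.cong refl, simp only: summand)
  also have "\<dots> = (\<Sum>x\<in>S i. \<Sum>y\<in>A i. W i x y * (\<Sum>g\<in>Pi\<^sub>E (-{i}) S. \<Sum>h\<in>Pi\<^sub>E (-{i}) A. ?rest g h))"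
    by (simp add: sum_distrib_left sum.swap[of _ "Pi\<^sub>E (-{i}) S" "A i"])
  finally show ?thesis
    by (simp add: sum_distrib_right)
qed

lemma sum_prod_weights_eq_if_invariant:
  fixes S :: "'i::finite \<Rightarrow> 's set" and A :: "'i \<Rightarrow> 'a set"
    and W W' :: "'i \<Rightarrow> 's \<Rightarrow> 'a \<Rightarrow> real" and G :: "('i \<Rightarrow> 's) \<Rightarrow> ('i \<Rightarrow> 'a) \<Rightarrow> real"
  assumes invariant: "\<And>s a x y. s \<in> Pi\<^sub>E UNIV S \<Longrightarrow> a \<in> Pi\<^sub>E UNIV A \<Longrightarrow> x \<in> S i \<Longrightarrow> y \<in> A i \<Longrightarrow>
       G (s(i := x)) (a(i := y)) = G s a"
    and others: "\<And>j. j \<noteq> i \<Longrightarrow> W' j = W j"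
    and total: "(\<Sum>x\<in>S i. \<Sum>y\<in>A i. W' i x y) = (\<Sum>x\<in>S i. \<Sum>y\<in>A i. W i x y)"
  shows "(\<Sum>s\<in>Pi\<^sub>E UNIV S. \<Sum>a\<in>Pi\<^sub>E UNIV A. (\<Prod>j\<in>UNIV. W' j (s j) (a j)) * G s a)
       = (\<Sum>s\<in>Pi\<^sub>E UNIV S. \<Sum>a\<in>Pi\<^sub>E UNIV A. (\<Prod>j\<in>UNIV. W j (s j) (a j)) * G s a)"
proof (cases "S i = {} \<or> A i = {}")
  case True
  then have "Pi\<^sub>E UNIV S = {} \<or> Pi\<^sub>E UNIV A = {}"
    by (auto simp: PiE_eq_empty_iff)
  then show ?thesis by auto
next
  case False
  then obtain c d where "c \<in> S i" "d \<in> A i" by auto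
  note factor = sum_prod_weights_factor[where S = S and A = A and G = G, OF invariant this]
  have "(\<Prod>j\<in>-{i}. W' j (g j) (h j)) = (\<Prod>j\<in>-{i}. W j (g j) (h j))" for g h
    by (rule prod.cong) (auto simp: others)
  then show ?thesis
    by (simp add: factor total)
qed

lemma expected_reward_invariant_under_deviation:
  fixes S :: "'i::finite \<Rightarrow> 's set" and A :: "'i \<Rightarrow> 'a set"
  assumes finS: "\<And>i. finite (S i)" and finA: "\<And>i. finite (A i)"
    and trans: "local_transitions S A P" and profile: "policy_profile S A xi"
    and deviation: "local_policy (S i) (A i) xi'" and s0: "s0 \<in> joint_states S"
    and invariant: "\<And>s a x y. s \<in> joint_states S \<Longrightarrow> a \<in> joint_actions A \<Longrightarrow> x \<in> S i \<Longrightarrow> y \<in> A i \<Longrightarrow>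
       G (s(i := x)) (a(i := y)) = G s a"
  shows "expected_reward S A P (xi(i := xi')) G s0 t = expected_reward S A P xi G s0 t"
proof -
  have kernel: "\<forall>x\<in>S i. \<forall>y\<in>A i. is_distr (S i) (P i x y)"
    using trans by (simp add: local_transitions_def)
  have "s0 i \<in> S i"
    using s0 by (auto simp: joint_states_def)
  then have "(\<Sum>x\<in>S i. \<Sum>y\<in>A i. local_sa_dist (S i) (A i) (P i) xi' (s0 i) t x y)
      = (\<Sum>x\<in>S i. \<Sum>y\<in>A i. local_sa_dist (S i) (A i) (P i) (xi i) (s0 i) t x y)"
    using profile deviation finS
    by (simp add: sum_local_sa_dist[OF _ _ kernel] policy_profile_def)
  then show ?thesis
    unfolding expected_reward_eq_sum_prod_local_sa_dist[OF finS finA]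
    using invariant unfolding joint_states_def joint_actions_def
    by (intro sum_prod_weights_eq_if_invariant) auto
qed

lemma abs_expected_reward_le:
  fixes S :: "'i::finite \<Rightarrow> 's set" and A :: "'i \<Rightarrow> 'a set"
  assumes finS: "\<And>i. finite (S i)" and finA: "\<And>i. finite (A i)"
    and trans: "local_transitions S A P" and profile: "policy_profile S A xi"
    and s0: "s0 \<in> joint_states S"
  shows "\<bar>expected_reward S A P xi R s0 t\<bar> \<le> (\<Sum>s\<in>joint_states S. \<Sum>a\<in>joint_actions A. \<bar>R s a\<bar>)"
proof -
  let ?w = "\<lambda>s a. \<Prod>j\<in>UNIV. local_sa_dist (S j) (A j) (P j) (xi j) (s0 j) t (s j) (a j)"
  have weight_bounds: "0 \<le> ?w s a \<and> ?w s a \<le> 1"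
    if "s \<in> joint_states S" "a \<in> joint_actions A" for s a
  proof -
    have "0 \<le> local_sa_dist (S j) (A j) (P j) (xi j) (s0 j) t (s j) (a j) \<and>
          local_sa_dist (S j) (A j) (P j) (xi j) (s0 j) t (s j) (a j) \<le> 1" for j
      using that s0 trans profile finS finA
      by (intro local_sa_dist_bounds)
        (auto simp: joint_states_def joint_actions_def local_transitions_def policy_profile_def)
    then show ?thesis
      by (simp add: prod_nonneg prod_le_1)
  qed
  have "\<bar>expected_reward S A P xi R s0 t\<bar> \<le> (\<Sum>s\<in>joint_states S. \<Sum>a\<in>joint_actions A. \<bar>?w s a * R s a\<bar>)"
    unfolding expected_reward_eq_sum_prod_local_sa_dist[OF finS finA]
    by (rule order.trans[OF sum_abs]) (intro sum_mono sum_abs)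
  also have "\<dots> \<le> (\<Sum>s\<in>joint_states S. \<Sum>a\<in>joint_actions A. \<bar>R s a\<bar>)"
    using weight_bounds by (intro sum_mono) (simp add: abs_mult mult_left_le_one_le)
  finally show ?thesis .
qed

lemma summable_discounted_expected_reward:
  fixes S :: "'i::finite \<Rightarrow> 's set" and A :: "'i \<Rightarrow> 'a set"
  assumes "\<And>i. finite (S i)" and "\<And>i. finite (A i)"
    and "local_transitions S A P" and "policy_profile S A xi"
    and "s0 \<in> joint_states S" and "0 < \<gamma>" "\<gamma> < 1"
  shows "summable (\<lambda>t. \<gamma> ^ t * expected_reward S A P xi R s0 t)"
proof (rule summable_comparison_test)
  let ?B = "\<Sum>s\<in>joint_states S. \<Sum>a\<in>joint_actions A. \<bar>R s a\<bar>"
  show "\<exists>N. \<forall>t\<ge>N. norm (\<gamma> ^ t * expected_reward S A P xi R s0 t) \<le> \<gamma> ^ t * ?B"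
    using abs_expected_reward_le[OF assms(1-5)] \<open>0 < \<gamma>\<close>
    by (auto simp: abs_mult intro!: mult_left_mono)
  show "summable (\<lambda>t. \<gamma> ^ t * ?B)"
    using assms(6,7) by (intro summable_mult2 summable_geometric) simp
qed

lemma disc_value_diff:
  fixes S :: "'i::finite \<Rightarrow> 's set" and A :: "'i \<Rightarrow> 'a set"
  assumes "\<And>i. finite (S i)" and "\<And>i. finite (A i)"
    and "local_transitions S A P" and "policy_profile S A xi"
    and "s0 \<in> joint_states S" and "0 < \<gamma>" "\<gamma> < 1"
  shows "disc_value S A P \<gamma> xi (\<lambda>s a. R s a - R' s a) s0
       = disc_value S A P \<gamma> xi R s0 - disc_value S A P \<gamma> xi R' s0"
proof -
  have "expected_reward S A P xi (\<lambda>s a. R s a - R' s a) s0 t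
      = expected_reward S A P xi R s0 t - expected_reward S A P xi R' s0 t" for t
    by (simp add: expected_reward_def right_diff_distrib sum_subtractf)
  then show ?thesis
    unfolding disc_value_def
    by (simp add: right_diff_distrib suminf_diff summable_discounted_expected_reward[OF assms])
qed

theorem mainTheorem3:
  fixes S :: "'i::finite \<Rightarrow> 's set" and A :: "'i \<Rightarrow> 'a set"
    and P :: "'i \<Rightarrow> 's \<Rightarrow> 'a \<Rightarrow> 's \<Rightarrow> real"
    and r :: "'i \<Rightarrow> ('i \<Rightarrow> 's) \<Rightarrow> ('i \<Rightarrow> 'a) \<Rightarrow> real"
    and \<phi> :: "('i \<Rightarrow> 's) \<Rightarrow> ('i \<Rightarrow> 'a) \<Rightarrow> real"
    and \<gamma> :: real
  assumes finS: "\<And>i. finite (S i)" and finA: "\<And>i. finite (A i)"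
    and gamma: "0 < \<gamma>" "\<gamma> < 1"
    and trans: "local_transitions S A P"
    and potential: "\<And>i s a si' ai'. s \<in> joint_states S \<Longrightarrow> a \<in> joint_actions A \<Longrightarrow>
        si' \<in> S i \<Longrightarrow> ai' \<in> A i \<Longrightarrow>
        r i s a - r i (s(i := si')) (a(i := ai')) = \<phi> s a - \<phi> (s(i := si')) (a(i := ai'))"
  shows "\<forall>i xi xi' s. policy_profile S A xi \<longrightarrow> local_policy (S i) (A i) xi' \<longrightarrow>
           s \<in> joint_states S \<longrightarrow>
           disc_value S A P \<gamma> xi (r i) s - disc_value S A P \<gamma> (xi(i := xi')) (r i) s
         = disc_value S A P \<gamma> xi \<phi> s - disc_value S A P \<gamma> (xi(i := xi')) \<phi> s"
proof (intro allI impI)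
  fix i xi xi' s0
  assume profile: "policy_profile S A xi" and deviation: "local_policy (S i) (A i) xi'"
    and s0: "s0 \<in> joint_states S"
  let ?gap = "\<lambda>s a. r i s a - \<phi> s a"
  have profile': "policy_profile S A (xi(i := xi'))"
    using profile deviation by (simp add: policy_profile_def)
  have "?gap (s(i := x)) (a(i := y)) = ?gap s a"
    if "s \<in> joint_states S" "a \<in> joint_actions A" "x \<in> S i" "y \<in> A i" for s a x y
    using potential[OF that] by simp
  then have "disc_value S A P \<gamma> (xi(i := xi')) ?gap s0 = disc_value S A P \<gamma> xi ?gap s0"
    unfolding disc_value_def
    by (simp add: expected_reward_invariant_under_deviation[OF finS finA trans profile deviation s0])
  then show "disc_value S A P \<gamma> xi (r i) s0 - disc_value S A P \<gamma> (xi(i := xi')) (r i) s0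
           = disc_value S A P \<gamma> xi \<phi> s0 - disc_value S A P \<gamma> (xi(i := xi')) \<phi> s0"
    by (simp add: disc_value_diff[OF finS finA trans _ s0 gamma] profile profile')
qed

end
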